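(* Let $\beta=0$, $R\ge0$, and let $D>0$ be odd. Let $\alpha_\infty^D$ be the maximum value of $\alpha_0$ over all numerical walls for the Chern character $(-R,0,D,0)$ on $\mathbb{P}^3$. Then $D-1<\alpha_\infty^D\le D$.
   Context: On $\mathbb{P}^3$ with hyperplane class $H$, Chern characters are the vectors of coefficients of $1,H,H^2,H^3$. For $v=(-R,0,D,0)$ and the Bayer–Macrì–Toda stability conditions $\sigma_{0,\alpha,s}$ ($\alpha,s>0$; central charge $Z=-(\operatorname{ch}_3-(s+\frac16)\alpha^2\operatorname{ch}_1)+\sqrt{-1}(\operatorname{ch}_2-\frac{\alpha^2}{2}\operatorname{ch}_0)$), a numerical wall is a curve $(s+\frac16)\alpha^2=\alpha_0^2/6$ with $\alpha_0^2=6e/c$, where $(r,c,d,e)=\operatorname{ch}(A)$ for some $A\in D^b(\mathbb{P}^3)$ with $c>0$ satisfying $0<d<D$, $0<c(6e)\le\min\{4d^2,4(D-d)^2\}$, and $-\frac{c(2D-2d)}{6e}-R\le r\le\frac{2cd}{6e}$. *)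

theory Defs
  imports Complex_Main
begin

text \<open>Chern characters (coefficients of 1, H, H^2, H^3) of objects of D^b(P^3).
  K_0(P^3) is freely generated by O, O(1), O(2), O(3), and ch(O(k)) = (1, k, k^2/2, k^3/6),
  so the Chern characters of objects of D^b(P^3) are exactly the integer combinations below.\<close>
definition is_ch_P3 :: "real \<Rightarrow> real \<Rightarrow> real \<Rightarrow> real \<Rightarrow> bool" where
  "is_ch_P3 r c d e \<longleftrightarrow> (\<exists>n0 n1 n2 n3 :: int.
      r = of_int n0 + of_int n1 + of_int n2 + of_int n3 \<and>
      c = of_int n1 + 2 * of_int n2 + 3 * of_int n3 \<and>
      d = (of_int n1 + 4 * of_int n2 + 9 * of_int n3) / 2 \<and>
      e = (of_int n1 + 8 * of_int n2 + 27 * of_int n3) / 6)"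

definition numerical_wall_ch :: "real \<Rightarrow> real \<Rightarrow> real \<Rightarrow> real \<Rightarrow> real \<Rightarrow> real \<Rightarrow> bool" where
  "numerical_wall_ch R D r c d e \<longleftrightarrow>
     is_ch_P3 r c d e \<and> c > 0 \<and> 0 < d \<and> d < D \<and>
     0 < c * (6 * e) \<and> c * (6 * e) \<le> min (4 * d^2) (4 * (D - d)^2) \<and>
     - (c * (2 * D - 2 * d)) / (6 * e) - R \<le> r \<and> r \<le> (2 * c * d) / (6 * e)"

definition wall_alphas :: "real \<Rightarrow> real \<Rightarrow> real set" where
  "wall_alphas R D = {sqrt (6 * e / c) | r c d e. numerical_wall_ch R D r c d e}"

end

theory Submission
  imports Defs
begin

text \<open>Writing \<open>ch(A) = (r, C, d, E/6)\<close>, integrality in \<open>K\<^sub>0(\<P>\<^sup>3)\<close> forces \<open>C, E \<in> \<int>\<close> with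
  \<open>E \<equiv> C (mod 6)\<close>, and the wall conditions give \<open>1 \<le> C\<close>, \<open>1 \<le> E\<close> and, since
  \<open>min (4d\<^sup>2, 4(D - d)\<^sup>2) \<le> D\<^sup>2\<close>, also \<open>C E \<le> D\<^sup>2\<close>; here \<open>\<alpha>\<^sub>0\<^sup>2 = E/C\<close>.
  For \<open>C = 1\<close> the best choice is the largest \<open>E \<equiv> 1 (mod 6)\<close> below \<open>D\<^sup>2\<close>,
  which is realised by \<open>ch(A) = (0, 1, D/2, E/6)\<close>; for odd \<open>D\<close> we have \<open>D\<^sup>2 \<equiv> 1, 3 (mod 6)\<close>,
  so this \<open>E\<close> is at least \<open>D\<^sup>2 - 2 > (D - 1)\<^sup>2\<close>. For \<open>C \<ge> 2\<close> one only gets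
  \<open>E/C \<le> E \<le> D\<^sup>2/2\<close>, which is at most \<open>D\<^sup>2 - 2\<close> since such walls force \<open>|D| \<ge> 2\<close>.\<close>

lemma is_ch_P3_integral:
  assumes "is_ch_P3 r c d e"
  obtains C E :: int where "c = of_int C" "6 * e = of_int E" "E mod 6 = C mod 6"
proof -
  from assms obtain n1 n2 n3 :: int where
    "c = of_int n1 + 2 * of_int n2 + 3 * of_int n3"
    "e = (of_int n1 + 8 * of_int n2 + 27 * of_int n3) / 6"
    unfolding is_ch_P3_def by blast
  moreover have "(n1 + 8 * n2 + 27 * n3) mod 6 = (n1 + 2 * n2 + 3 * n3) mod 6"
  proof -
    have "n1 + 8 * n2 + 27 * n3 = (n1 + 2 * n2 + 3 * n3) + 6 * (n2 + 4 * n3)" by simp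
    then show ?thesis by (simp only: mod_mult_self2)
  qed
  ultimately show thesis
    by (intro that[of "n1 + 2 * n2 + 3 * n3" "n1 + 8 * n2 + 27 * n3"]) simp_all
qed

lemma is_ch_P3_degree_one:
  fixes r k E :: int
  assumes "odd k" and "E mod 6 = 1"
  shows "is_ch_P3 (of_int r) 1 (of_int k / 2) (of_int E / 6)"
proof -
  obtain m where m: "k = 2 * m + 1" using assms(1) by (metis oddE)
  obtain q where q: "E = 6 * q + 1" using div_mult_mod_eq[of E 6] assms(2) by (metis mult.commute)
  define n3 where "n3 = q - m"
  define n2 where "n2 = m - 3 * n3"
  define n1 where "n1 = 1 - 2 * n2 - 3 * n3"
  define n0 where "n0 = r - (n1 + n2 + n3)"
  have "real_of_int r = of_int n0 + of_int n1 + of_int n2 + of_int n3"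
    "1 = real_of_int n1 + 2 * of_int n2 + 3 * of_int n3"
    "real_of_int k = of_int n1 + 4 * of_int n2 + 9 * of_int n3"
    "real_of_int E = of_int n1 + 8 * of_int n2 + 27 * of_int n3"
    by (simp_all add: n0_def n1_def n2_def n3_def m q)
  then show ?thesis
    unfolding is_ch_P3_def by (intro exI[of _ n0] exI[of _ n1] exI[of _ n2] exI[of _ n3]) simp
qed

lemma min_four_sq_le_sq:
  fixes d D :: real
  assumes "0 \<le> d" and "d \<le> D"
  shows "min (4 * d\<^sup>2) (4 * (D - d)\<^sup>2) \<le> D\<^sup>2"
proof (cases "2 * d \<le> D")
  case True
  then have "(2 * d)\<^sup>2 \<le> D\<^sup>2" using assms by (intro power_mono) auto
  then show ?thesis by (simp add: power_mult_distrib)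
next
  case False
  then have "(2 * (D - d))\<^sup>2 \<le> D\<^sup>2" using assms by (intro power_mono) auto
  then show ?thesis by (simp only: power_mult_distrib min_le_iff_disj) simp
qed

lemma numerical_wall_ch_integral:
  assumes "numerical_wall_ch R D r c d e"
  obtains C E :: int where "c = of_int C" "6 * e = of_int E" "E mod 6 = C mod 6"
    "1 \<le> C" "1 \<le> E" "of_int (C * E) \<le> D\<^sup>2"
proof -
  from assms have ch: "is_ch_P3 r c d e" and "c > 0" "0 < d" "d < D" "0 < c * (6 * e)"
    and bound: "c * (6 * e) \<le> min (4 * d\<^sup>2) (4 * (D - d)\<^sup>2)"
    unfolding numerical_wall_ch_def by auto
  obtain C E where CE: "c = of_int C" "6 * e = of_int E" "E mod 6 = C mod 6"
    using is_ch_P3_integral[OF ch] .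
  have "1 \<le> C" using \<open>c > 0\<close> CE(1) by simp
  moreover have "0 < C * E" using \<open>0 < c * (6 * e)\<close> CE(1,2) by (simp flip: of_int_mult)
  ultimately have "1 \<le> E" by (simp add: zero_less_mult_iff)
  moreover have "c * (6 * e) \<le> D\<^sup>2"
    using bound min_four_sq_le_sq[of d D] \<open>0 < d\<close> \<open>d < D\<close> by linarith
  then have "of_int (C * E) \<le> D\<^sup>2" using CE(1,2) by simp
  ultimately show thesis using that CE \<open>1 \<le> C\<close> by blast
qed

definition greatest_1mod6_le :: "int \<Rightarrow> int" where
  "greatest_1mod6_le N = 6 * ((N - 1) div 6) + 1"

lemma greatest_1mod6_le_le: "greatest_1mod6_le N \<le> N"
  unfolding greatest_1mod6_le_def by presburger

lemma greatest_1mod6_le_mod: "greatest_1mod6_le N mod 6 = 1"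
  unfolding greatest_1mod6_le_def by presburger

lemma greatest_1mod6_le_greatest: "E \<le> N \<Longrightarrow> E mod 6 = 1 \<Longrightarrow> E \<le> greatest_1mod6_le N"
  unfolding greatest_1mod6_le_def by presburger

lemma greatest_1mod6_le_odd_sq:
  fixes D :: int
  assumes "odd D"
  shows "D\<^sup>2 - 2 \<le> greatest_1mod6_le (D\<^sup>2)"
proof -
  have "D mod 6 = 1 \<or> D mod 6 = 3 \<or> D mod 6 = 5" using assms by presburger
  moreover have "D\<^sup>2 mod 6 = (D mod 6)\<^sup>2 mod 6" by (simp add: power_mod)
  ultimately have "D\<^sup>2 mod 6 = 1 \<or> D\<^sup>2 mod 6 = 3" by auto
  then show ?thesis unfolding greatest_1mod6_le_def by presburger
qed

lemma numerical_wall_ch_degree_one: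
  fixes R D E :: int
  assumes "0 \<le> R" and "odd D" and "0 < D" and "1 \<le> E" and "E \<le> D\<^sup>2" and "E mod 6 = 1"
  shows "numerical_wall_ch R D 0 1 (D / 2) (E / 6)"
proof -
  have "is_ch_P3 (of_int 0) 1 (D / 2) (E / 6)"
    using is_ch_P3_degree_one[OF assms(2,6)] .
  moreover have "4 * (D / 2)\<^sup>2 = D\<^sup>2" "4 * (D - D / 2)\<^sup>2 = D\<^sup>2"
    by (simp_all add: power2_eq_square field_simps)
  moreover have "real_of_int E \<le> D\<^sup>2" using assms(5) by (simp flip: of_int_power)
  moreover have "0 \<le> real_of_int D / E" using assms(3,4) by simp
  moreover have "- real_of_int D \<le> real_of_int E * real_of_int R"
  proof -
    have "0 \<le> real_of_int E * real_of_int R" using assms(1,4) by simp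
    then show ?thesis using assms(3) by linarith
  qed
  ultimately show ?thesis
    unfolding numerical_wall_ch_def using assms(3,4) by (simp add: field_simps)
qed

lemma numerical_wall_ch_ratio_le:
  fixes D :: int
  assumes "odd D" and wall: "numerical_wall_ch R D r c d e"
  shows "6 * e / c \<le> greatest_1mod6_le (D\<^sup>2)"
proof -
  obtain C E where CE: "c = of_int C" "6 * e = of_int E" "E mod 6 = C mod 6"
    "1 \<le> C" "1 \<le> E" and "real_of_int (C * E) \<le> of_int (D\<^sup>2)"
    using numerical_wall_ch_integral[OF wall] by (metis of_int_power)
  then have CE_le: "C * E \<le> D\<^sup>2" by linarith
  consider "C = 1" | "2 \<le> C" using CE(4) by linarith
  then have "E \<le> greatest_1mod6_le (D\<^sup>2)"
  proof cases
    case 1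
    then show ?thesis using CE(3) CE_le by (intro greatest_1mod6_le_greatest) simp_all
  next
    case 2
    then have "2 * E \<le> C * E" using CE(5) by (intro mult_right_mono) simp_all
    then have "2 * E \<le> D\<^sup>2" using CE_le by linarith
    then have "\<not> D\<^sup>2 \<le> 1" using CE(5) by linarith
    then have "2 \<le> \<bar>D\<bar>" by (simp add: abs_square_le_1)
    then have "4 \<le> D\<^sup>2" using abs_le_square_iff[of 2 D] by simp
    then show ?thesis using \<open>2 * E \<le> D\<^sup>2\<close> greatest_1mod6_le_odd_sq[OF assms(1)] by linarith
  qed
  moreover have "6 * e / c \<le> 6 * e" using CE(1,2,4,5) by (simp add: divide_le_eq)
  ultimately show ?thesis using CE(2) by simp
qed

theorem lemma4p2:
  fixes R D :: int
  assumes "R \<ge> 0" and "D > 0" and "odd D"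
  shows "\<exists>a \<in> wall_alphas (real_of_int R) (real_of_int D).
           (\<forall>b \<in> wall_alphas (real_of_int R) (real_of_int D). b \<le> a) \<and>
           real_of_int D - 1 < a \<and> a \<le> real_of_int D"
proof -
  define M where "M = greatest_1mod6_le (D\<^sup>2)"
  have "M \<le> D\<^sup>2" and "D\<^sup>2 - 2 \<le> M"
    using greatest_1mod6_le_le greatest_1mod6_le_odd_sq[OF assms(3)] by (simp_all add: M_def)
  have "1 \<le> M"
    using assms(2) by (simp add: M_def greatest_1mod6_le_greatest one_le_power)
  have "(D - 1)\<^sup>2 < M"
    using \<open>1 \<le> M\<close> \<open>D\<^sup>2 - 2 \<le> M\<close> assms(2)
    by (cases "D = 1") (auto simp: power2_eq_square algebra_simps)
  have "numerical_wall_ch R D 0 1 (D / 2) (M / 6)"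
    using numerical_wall_ch_degree_one greatest_1mod6_le_mod assms \<open>1 \<le> M\<close> \<open>M \<le> D\<^sup>2\<close>
    by (simp add: M_def)
  then have "sqrt M \<in> wall_alphas R D"
    unfolding wall_alphas_def by force
  moreover have "b \<le> sqrt M" if "b \<in> wall_alphas R D" for b
    using that numerical_wall_ch_ratio_le[OF assms(3)]
    unfolding wall_alphas_def M_def by auto
  moreover have "real_of_int D - 1 < sqrt M"
    using \<open>(D - 1)\<^sup>2 < M\<close>
    by (intro real_less_rsqrt) (metis of_int_1 of_int_diff of_int_less_iff of_int_power)
  moreover have "sqrt M \<le> real_of_int D"
    using \<open>M \<le> D\<^sup>2\<close> assms(2) by (intro real_le_lsqrt) (simp_all flip: of_int_power)
  ultimately show ?thesis by blast
qed

end
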